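(* Let $R$ be a finite ring with identity, $\alpha\in(0,1)$, and $Q$ a probability distribution on $R$ constant on similarity classes. Let $\pi$ be the (unique) stationary distribution of the Markov chain $(X_t)$ on $R$ defined below. If $a,b\in R$ satisfy $S_a=S_b$, then $\pi(a)=\pi(b)$.
   Context: Similarity classes: $a,b$ are similar if $b=uau^{-1}$ for some unit $u$ of $R$. The Markov chain $(X_t)$ on $R$: at each step an independent coin with Heads probability $\alpha$ is tossed; on Heads, $X_{t+1}=X_t+Y$ with $Y$ uniformly distributed on $R$ (independent); on Tails, $X_{t+1}=Z\cdot X_t$ with $Z$ drawn independently from $Q$ (so the transition matrix is $M_R=\frac{\alpha}{|R|}J+(1-\alpha)B_R$, where $J$ is the all-ones matrix and $B_R(a,b)=\sum_{x\in R,\,xa=b}Q(x)$). For $a\in R$, $I_a=Ra$ is the principal left ideal generated by $a$ and $S_a$ is the set of elements of $I_a$ that generate $I_a$ as a left ideal. *)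

theory Defs
  imports Complex_Main
begin

definition ring_unit :: "'a::ring_1 \<Rightarrow> bool" where
  "ring_unit u \<longleftrightarrow> (\<exists>v. u * v = 1 \<and> v * u = 1)"

definition similar :: "'a::ring_1 \<Rightarrow> 'a \<Rightarrow> bool" where
  "similar a b \<longleftrightarrow> (\<exists>u v. u * v = 1 \<and> v * u = 1 \<and> b = u * a * v)"

definition left_ideal_gen :: "'a::ring_1 \<Rightarrow> 'a set" where
  "left_ideal_gen a = {x * a | x. True}"

definition gen_set :: "'a::ring_1 \<Rightarrow> 'a set" where
  "gen_set a = {y \<in> left_ideal_gen a. left_ideal_gen y = left_ideal_gen a}"

definition trans_matrix :: "real \<Rightarrow> ('a::{ring_1,finite} \<Rightarrow> real) \<Rightarrow> 'a \<Rightarrow> 'a \<Rightarrow> real" where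
  "trans_matrix \<alpha> Q a b = \<alpha> / real (card (UNIV :: 'a set)) + (1 - \<alpha>) * (\<Sum>x\<in>{x. x * a = b}. Q x)"

definition is_prob_dist :: "('a::finite \<Rightarrow> real) \<Rightarrow> bool" where
  "is_prob_dist p \<longleftrightarrow> (\<forall>x. p x \<ge> 0) \<and> (\<Sum>x\<in>UNIV. p x) = 1"

definition stationary :: "('a::finite \<Rightarrow> 'a \<Rightarrow> real) \<Rightarrow> ('a \<Rightarrow> real) \<Rightarrow> bool" where
  "stationary M p \<longleftrightarrow> is_prob_dist p \<and> (\<forall>b. p b = (\<Sum>a\<in>UNIV. p a * M a b))"

end

theory Submission
  imports Defs
begin

text \<open>
  If \<open>S\<^sub>a = S\<^sub>b\<close> then \<open>R a = R b\<close>, and in a finite ring this forces \<open>b = u a\<close> for a unit \<open>u\<close>: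
  writing \<open>b = x a\<close> and \<open>a = s b\<close>, every left ideal meets the fibres \<open>{y. y a = b}\<close> and
  \<open>{y. y a = a}\<close> in equally many elements (a nonempty intersection is a coset of the ideal's part of
  the left annihilator of \<open>a\<close>, and left multiplication by \<open>s\<close> resp. \<open>x\<close> moves one fibre into
  the other).  The non-units
  are the union of the proper principal left ideals, so inclusion-exclusion shows that both
  fibres contain equally many units; the second one contains \<open>1\<close>.

  Left multiplication by a unit \<open>u\<close> is an automorphism of the chain, because conjugation by
  \<open>u\<close> preserves \<open>Q\<close>.  Hence \<open>x \<mapsto> \<pi> (u x)\<close> is again stationary, and it equals \<open>\<pi>\<close> because the
  stationary equation \<open>\<pi> = \<alpha>/|R| + (1 - \<alpha>) \<pi> B\<^sub>R\<close> is a contraction in the \<open>\<ell>\<^sup>1\<close> norm.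
\<close>

lemma card_Int_Union_eq_if_card_Int_Inter_eq:
  assumes "finite A" "finite B" "finite F"
    and "\<And>G. G \<subseteq> F \<Longrightarrow> G \<noteq> {} \<Longrightarrow> card (A \<inter> \<Inter>G) = card (B \<inter> \<Inter>G)"
  shows "card (A \<inter> \<Union>F) = card (B \<inter> \<Union>F)"
proof -
  have incl_excl: "int (card (X \<inter> \<Union>F))
      = (\<Sum>G | G \<subseteq> F \<and> G \<noteq> {}. (- 1) ^ (card G + 1) * int (card (X \<inter> \<Inter>G)))"
    if "finite X" for X :: "'a set"
  proof (rule Incl_Excl_Union[OF _ \<open>finite F\<close>])
    fix S T :: "'a set" assume "disjnt S T"
    then have "(X \<inter> S) \<inter> (X \<inter> T) = {}" by (auto simp: disjnt_def)
    then show "int (card (X \<inter> (S \<union> T))) = int (card (X \<inter> S)) + int (card (X \<inter> T))"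
      using \<open>finite X\<close> by (simp add: Int_Un_distrib card_Un_disjoint)
  qed
  have "int (card (A \<inter> \<Union>F)) = int (card (B \<inter> \<Union>F))"
    unfolding incl_excl[OF \<open>finite A\<close>] incl_excl[OF \<open>finite B\<close>]
    using assms(4) by (intro sum.cong) auto
  then show ?thesis by simp
qed

definition left_ideal :: "'a::ring_1 set \<Rightarrow> bool" where
  "left_ideal I \<longleftrightarrow> 0 \<in> I \<and> (\<forall>x\<in>I. \<forall>y\<in>I. x + y \<in> I) \<and> (\<forall>r. \<forall>x\<in>I. r * x \<in> I)"

lemma left_ideal_UNIV: "left_ideal UNIV"
  by (simp add: left_ideal_def)

lemma left_ideal_Inter: "\<forall>I\<in>\<I>. left_ideal I \<Longrightarrow> left_ideal (\<Inter>\<I>)"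
  by (simp add: left_ideal_def)

lemma left_ideal_left_ideal_gen: "left_ideal (left_ideal_gen a)"
  unfolding left_ideal_def left_ideal_gen_def
  by (auto simp flip: distrib_right mult.assoc intro: exI[of _ 0])

lemma left_ideal_diff: "left_ideal I \<Longrightarrow> x \<in> I \<Longrightarrow> y \<in> I \<Longrightarrow> x - y \<in> I"
  unfolding left_ideal_def by (metis diff_conv_add_uminus mult_minus1)

lemma mem_left_ideal_gen_self: "a \<in> left_ideal_gen a"
  unfolding left_ideal_gen_def by (metis (mono_tags) mem_Collect_eq mult_1_left)

lemma ring_unit_iff_left_inverse:
  fixes u :: "'a::{ring_1,finite}"
  shows "ring_unit u \<longleftrightarrow> (\<exists>v. v * u = 1)"
proof
  assume "\<exists>v. v * u = 1"
  then obtain v where v: "v * u = 1" ..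
  have "inj (\<lambda>w. u * w)"
  proof (rule injI)
    fix p q assume "u * p = u * q"
    then have "v * u * p = v * u * q" by (simp add: mult.assoc)
    then show "p = q" by (simp add: v)
  qed
  then have "surj (\<lambda>w. u * w)"
    by (simp add: finite_UNIV_inj_surj)
  then obtain w where w: "u * w = 1"
    by (metis surjD)
  have "v = v * u * w"
    by (simp add: w mult.assoc)
  then have "v = w"
    by (simp add: v)
  then show "ring_unit u"
    using v w unfolding ring_unit_def by blast
qed (auto simp: ring_unit_def)

lemma nonunits_eq_Union_left_ideal_gen:
  fixes N :: "'a::{ring_1,finite} set"
  defines "N \<equiv> {z. \<not> ring_unit z}"
  shows "N = \<Union>(left_ideal_gen ` N)"
proof
  show "N \<subseteq> \<Union>(left_ideal_gen ` N)"
    using mem_left_ideal_gen_self by blast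
  show "\<Union>(left_ideal_gen ` N) \<subseteq> N"
  proof clarify
    fix z y assume "z \<in> N" "y \<in> left_ideal_gen z"
    then obtain w where "y = w * z" unfolding left_ideal_gen_def by blast
    then have "ring_unit y \<Longrightarrow> ring_unit z"
      by (metis mult.assoc ring_unit_iff_left_inverse)
    then show "y \<in> N" using \<open>z \<in> N\<close> unfolding N_def by blast
  qed
qed

lemma card_fibre_Int_left_ideal:
  fixes a c :: "'a::ring_1"
  assumes I: "left_ideal I" and "y\<^sub>0 \<in> I" "y\<^sub>0 * a = c"
  shows "card ({y. y * a = c} \<inter> I) = card ({z. z * a = 0} \<inter> I)"
proof -
  have "{y. y * a = c} \<inter> I = (\<lambda>z. y\<^sub>0 + z) ` ({z. z * a = 0} \<inter> I)"
  proof (intro equalityI subsetI)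
    fix y assume "y \<in> {y. y * a = c} \<inter> I"
    then have "y - y\<^sub>0 \<in> {z. z * a = 0} \<inter> I"
      using assms left_ideal_diff by (auto simp: left_diff_distrib)
    then show "y \<in> (\<lambda>z. y\<^sub>0 + z) ` ({z. z * a = 0} \<inter> I)"
      by (metis add.commute diff_add_cancel image_eqI)
  qed (use assms in \<open>auto simp: left_ideal_def distrib_right\<close>)
  then show ?thesis
    by (simp add: card_image)
qed

lemma card_fibre_Int_left_ideal_eq:
  fixes a x s :: "'a::ring_1"
  assumes sx: "s * x * a = a" and I: "left_ideal I"
  shows "card ({y. y * a = x * a} \<inter> I) = card ({y. y * a = a} \<inter> I)"
proof -
  have "(\<exists>y\<in>I. y * a = x * a) \<longleftrightarrow> (\<exists>y\<in>I. y * a = a)"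
  proof
    assume "\<exists>y\<in>I. y * a = x * a"
    then obtain y where "y \<in> I" "y * a = x * a" ..
    then have "s * y \<in> I" "s * y * a = a"
      using I sx by (auto simp: left_ideal_def mult.assoc)
    then show "\<exists>y\<in>I. y * a = a" ..
  next
    assume "\<exists>y\<in>I. y * a = a"
    then obtain y where "y \<in> I" "y * a = a" ..
    then have "x * y \<in> I" "x * y * a = x * a"
      using I by (auto simp: left_ideal_def mult.assoc)
    then show "\<exists>y\<in>I. y * a = x * a" ..
  qed
  then consider "\<exists>y\<in>I. y * a = x * a" "\<exists>y\<in>I. y * a = a"
    | "{y. y * a = x * a} \<inter> I = {}" "{y. y * a = a} \<inter> I = {}"
    by blast
  then show ?thesis
    by cases (metis card_fibre_Int_left_ideal[OF I], simp)
qed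

lemma ex_ring_unit_mult_eq:
  fixes a x s :: "'a::{ring_1,finite}"
  assumes sx: "s * x * a = a"
  shows "\<exists>u. ring_unit u \<and> u * a = x * a"
proof -
  define N :: "'a set" where "N = {z. \<not> ring_unit z}"
  define A where "A = {y. y * a = x * a}"
  define B where "B = {y. y * a = a}"
  have "card (A \<inter> \<Union>(left_ideal_gen ` N)) = card (B \<inter> \<Union>(left_ideal_gen ` N))"
  proof (rule card_Int_Union_eq_if_card_Int_Inter_eq)
    fix G assume "G \<subseteq> left_ideal_gen ` N" "G \<noteq> {}"
    then have "left_ideal (\<Inter>G)"
      using left_ideal_Inter left_ideal_left_ideal_gen by blast
    then show "card (A \<inter> \<Inter>G) = card (B \<inter> \<Inter>G)"
      unfolding A_def B_def using sx by (rule card_fibre_Int_left_ideal_eq[rotated])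
  qed simp_all
  then have "card (A \<inter> N) = card (B \<inter> N)"
    unfolding N_def by (simp flip: nonunits_eq_Union_left_ideal_gen)
  moreover have "card A = card B"
    using card_fibre_Int_left_ideal_eq[OF sx left_ideal_UNIV] unfolding A_def B_def by simp
  ultimately have "card (A - N) = card (B - N)"
    by (metis card_Int_Diff finite add_left_cancel)
  moreover have "1 \<in> B - N"
    unfolding B_def N_def ring_unit_def by simp
  ultimately have "A - N \<noteq> {}"
    by (metis card_0_eq empty_iff finite)
  then show ?thesis
    unfolding A_def N_def by blast
qed

lemma left_ideal_gen_eq_imp_ex_ring_unit:
  fixes a b :: "'a::{ring_1,finite}"
  assumes "left_ideal_gen a = left_ideal_gen b"
  shows "\<exists>u. ring_unit u \<and> b = u * a"
proof -
  obtain r where r: "b = r * a"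
    using mem_left_ideal_gen_self[of b] assms unfolding left_ideal_gen_def by auto
  obtain s where s: "a = s * b"
    using mem_left_ideal_gen_self[of a] assms unfolding left_ideal_gen_def by auto
  have "s * r * a = a"
    using r s by (simp add: mult.assoc)
  then show ?thesis
    using ex_ring_unit_mult_eq r by metis
qed

lemma stochastic_scaled_fixed_point_eq_0:
  fixes d :: "'a::finite \<Rightarrow> real" and M :: "'a \<Rightarrow> 'a \<Rightarrow> real"
  assumes M_nonneg: "\<And>a b. M a b \<ge> 0" and M_row: "\<And>a. (\<Sum>b\<in>UNIV. M a b) = 1"
    and "\<bar>\<beta>\<bar> < 1" and d: "\<And>b. d b = \<beta> * (\<Sum>a\<in>UNIV. d a * M a b)"
  shows "d = (\<lambda>_. 0)"
proof -
  have "(\<Sum>b\<in>UNIV. \<bar>d b\<bar>) \<le> (\<Sum>b\<in>UNIV. \<bar>\<beta>\<bar> * (\<Sum>a\<in>UNIV. \<bar>d a\<bar> * M a b))"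
  proof (rule sum_mono)
    fix b
    have "\<bar>d b\<bar> = \<bar>\<beta>\<bar> * \<bar>\<Sum>a\<in>UNIV. d a * M a b\<bar>"
      by (subst d) (simp add: abs_mult)
    also have "\<dots> \<le> \<bar>\<beta>\<bar> * (\<Sum>a\<in>UNIV. \<bar>d a\<bar> * M a b)"
      using M_nonneg by (intro mult_left_mono) (auto intro: order_trans[OF sum_abs] simp: abs_mult)
    finally show "\<bar>d b\<bar> \<le> \<bar>\<beta>\<bar> * (\<Sum>a\<in>UNIV. \<bar>d a\<bar> * M a b)" .
  qed
  also have "\<dots> = \<bar>\<beta>\<bar> * (\<Sum>b\<in>UNIV. \<Sum>a\<in>UNIV. \<bar>d a\<bar> * M a b)"
    by (simp only: sum_distrib_left)
  also have "\<dots> = \<bar>\<beta>\<bar> * (\<Sum>a\<in>UNIV. \<Sum>b\<in>UNIV. \<bar>d a\<bar> * M a b)"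
    by (subst sum.swap) (rule refl)
  also have "\<dots> = \<bar>\<beta>\<bar> * (\<Sum>a\<in>UNIV. \<bar>d a\<bar>)"
    by (simp only: flip: sum_distrib_left) (simp add: M_row)
  finally have "(1 - \<bar>\<beta>\<bar>) * (\<Sum>a\<in>UNIV. \<bar>d a\<bar>) \<le> 0"
    by (simp add: algebra_simps)
  then have "(\<Sum>a\<in>UNIV. \<bar>d a\<bar>) = 0"
    using \<open>\<bar>\<beta>\<bar> < 1\<close> by (simp add: mult_le_0_iff antisym sum_nonneg)
  then show ?thesis
    by (simp add: fun_eq_iff sum_nonneg_eq_0_iff)
qed

lemma stochastic_affine_fixed_point_unique:
  fixes p q c :: "'a::finite \<Rightarrow> real" and M :: "'a \<Rightarrow> 'a \<Rightarrow> real"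
  assumes "\<And>a b. M a b \<ge> 0" "\<And>a. (\<Sum>b\<in>UNIV. M a b) = 1" "\<bar>\<beta>\<bar> < 1"
    and "\<And>b. p b = c b + \<beta> * (\<Sum>a\<in>UNIV. p a * M a b)"
    and "\<And>b. q b = c b + \<beta> * (\<Sum>a\<in>UNIV. q a * M a b)"
  shows "p = q"
proof -
  have "(\<lambda>b. p b - q b) = (\<lambda>_. 0)"
  proof (rule stochastic_scaled_fixed_point_eq_0[OF assms(1-3)])
    fix b
    show "p b - q b = \<beta> * (\<Sum>a\<in>UNIV. (p a - q a) * M a b)"
      by (subst assms(4), subst assms(5)) (simp add: algebra_simps sum_subtractf)
  qed
  then show ?thesis
    by (simp add: fun_eq_iff)
qed

definition left_mult_matrix :: "('a::ring_1 \<Rightarrow> real) \<Rightarrow> 'a \<Rightarrow> 'a \<Rightarrow> real" where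
  "left_mult_matrix Q a b = (\<Sum>x\<in>{x. x * a = b}. Q x)"

lemma left_mult_matrix_nonneg: "(\<And>x. Q x \<ge> 0) \<Longrightarrow> left_mult_matrix Q a b \<ge> 0"
  unfolding left_mult_matrix_def by (simp add: sum_nonneg)

lemma left_mult_matrix_row_sum:
  fixes Q :: "'a::{ring_1,finite} \<Rightarrow> real"
  shows "(\<Sum>b\<in>UNIV. left_mult_matrix Q a b) = (\<Sum>x\<in>UNIV. Q x)"
  unfolding left_mult_matrix_def
  using sum.group[of UNIV UNIV "\<lambda>x. x * a" Q] by simp

lemma left_mult_matrix_unit_mult:
  fixes Q :: "'a::ring_1 \<Rightarrow> real"
  assumes Q_sim: "\<And>x y. similar x y \<Longrightarrow> Q x = Q y" and uv: "u * v = 1" "v * u = 1"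
  shows "left_mult_matrix Q (u * a) (u * b) = left_mult_matrix Q a b"
  unfolding left_mult_matrix_def
proof (rule sum.reindex_bij_witness[of _ "\<lambda>y. u * y * v" "\<lambda>x. v * x * u"])
  fix x assume "x \<in> {x. x * (u * a) = u * b}"
  then have "v * (x * (u * a)) = v * (u * b)" by simp
  then show "v * x * u \<in> {y. y * a = b}"
    using uv by (simp add: mult.assoc[symmetric])
  show "u * (v * x * u) * v = x"
    using uv by (metis mult.assoc mult_1_left mult_1_right)
  have "similar x (v * x * u)"
    unfolding similar_def using uv by blast
  then show "Q (v * x * u) = Q x"
    using Q_sim by simp
next
  fix y assume "y \<in> {y. y * a = b}"
  then have "u * y * (v * u) * a = u * b"
    using uv by (simp add: mult.assoc)
  then show "u * y * v \<in> {x. x * (u * a) = u * b}"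
    by (simp add: mult.assoc)
  show "v * (u * y * v) * u = y"
    using uv by (metis mult.assoc mult_1_left mult_1_right)
qed

lemma stationary_trans_matrix_eq:
  fixes Q \<pi> :: "'a::{ring_1,finite} \<Rightarrow> real"
  assumes "stationary (trans_matrix \<alpha> Q) \<pi>"
  shows "\<pi> b = \<alpha> / card (UNIV :: 'a set) + (1 - \<alpha>) * (\<Sum>a\<in>UNIV. \<pi> a * left_mult_matrix Q a b)"
proof -
  have "\<pi> b = (\<Sum>a\<in>UNIV. \<pi> a * trans_matrix \<alpha> Q a b)"
    using assms unfolding stationary_def by blast
  also have "\<dots> = (\<Sum>a\<in>UNIV. \<alpha> / card (UNIV :: 'a set) * \<pi> a + (1 - \<alpha>) * (\<pi> a * left_mult_matrix Q a b))"
    unfolding trans_matrix_def left_mult_matrix_def by (simp add: algebra_simps)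
  also have "\<dots> = \<alpha> / card (UNIV :: 'a set) * (\<Sum>a\<in>UNIV. \<pi> a) + (1 - \<alpha>) * (\<Sum>a\<in>UNIV. \<pi> a * left_mult_matrix Q a b)"
    by (simp add: sum.distrib sum_distrib_left)
  also have "(\<Sum>a\<in>UNIV. \<pi> a) = 1"
    using assms unfolding stationary_def is_prob_dist_def by blast
  finally show ?thesis
    by simp
qed

lemma stationary_unit_mult_invariant:
  fixes Q \<pi> :: "'a::{ring_1,finite} \<Rightarrow> real"
  assumes "0 < \<alpha>" "\<alpha> < 1" "is_prob_dist Q" "\<And>x y. similar x y \<Longrightarrow> Q x = Q y"
    and \<pi>: "stationary (trans_matrix \<alpha> Q) \<pi>" and "ring_unit u"
  shows "\<pi> (u * c) = \<pi> c"
proof -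
  obtain v where uv: "u * v = 1" "v * u = 1"
    using \<open>ring_unit u\<close> unfolding ring_unit_def by blast
  define M where "M = left_mult_matrix Q"
  have "bij ((*) u)"
    by (rule o_bij[of "(*) v"]) (use uv in \<open>auto simp: fun_eq_iff simp flip: mult.assoc\<close>)
  have "\<pi> (u * b) = \<alpha> / card (UNIV :: 'a set) + (1 - \<alpha>) * (\<Sum>a\<in>UNIV. \<pi> (u * a) * M a b)" for b
  proof -
    have "(\<Sum>a\<in>UNIV. \<pi> a * M a (u * b)) = (\<Sum>a\<in>UNIV. \<pi> (u * a) * M (u * a) (u * b))"
      using \<open>bij ((*) u)\<close> by (rule sum.reindex_bij_betw[symmetric])
    also have "\<dots> = (\<Sum>a\<in>UNIV. \<pi> (u * a) * M a b)"
      unfolding M_def using left_mult_matrix_unit_mult[OF assms(4) uv] by simp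
    finally show ?thesis
      using stationary_trans_matrix_eq[OF \<pi>, of "u * b"] unfolding M_def by simp
  qed
  moreover have "\<pi> b = \<alpha> / card (UNIV :: 'a set) + (1 - \<alpha>) * (\<Sum>a\<in>UNIV. \<pi> a * M a b)" for b
    unfolding M_def by (rule stationary_trans_matrix_eq[OF \<pi>])
  moreover have "M a b \<ge> 0" "(\<Sum>b\<in>UNIV. M a b) = 1" for a b
    using \<open>is_prob_dist Q\<close> unfolding is_prob_dist_def M_def
    by (simp_all add: left_mult_matrix_nonneg left_mult_matrix_row_sum)
  moreover have "\<bar>1 - \<alpha>\<bar> < 1"
    using \<open>0 < \<alpha>\<close> \<open>\<alpha> < 1\<close> by simp
  ultimately have "(\<lambda>b. \<pi> (u * b)) = \<pi>"
    by (intro stochastic_affine_fixed_point_unique[where M = M and \<beta> = "1 - \<alpha>"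
          and c = "\<lambda>_. \<alpha> / card (UNIV :: 'a set)"]) blast+
  then show ?thesis
    by (simp add: fun_eq_iff)
qed

theorem proposition3p1:
  fixes \<alpha> :: real and Q \<pi> :: "'a::{ring_1,finite} \<Rightarrow> real" and a b :: 'a
  assumes "0 < \<alpha>" and "\<alpha> < 1"
    and "is_prob_dist Q"
    and "\<And>x y. similar x y \<Longrightarrow> Q x = Q y"
    and "stationary (trans_matrix \<alpha> Q) \<pi>"
    and "gen_set a = gen_set b"
  shows "\<pi> a = \<pi> b"
proof -
  have "left_ideal_gen a = left_ideal_gen b"
    using \<open>gen_set a = gen_set b\<close> mem_left_ideal_gen_self[of a]
    unfolding gen_set_def by blast
  then obtain u where "ring_unit u" "b = u * a"
    using left_ideal_gen_eq_imp_ex_ring_unit by blast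
  then show ?thesis
    using stationary_unit_mult_invariant[OF assms(1-5)] by simp
qed

end
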